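(* Let $f:\mathcal{X}\to\Delta^{k-1}$ be a classifier outputting confidence vectors, let $x^{(1)},\dots,x^{(n)}\in\mathcal{X}$, let $f_\# P(c)=\frac1n\sum_{i=1}^n\delta_{f(x^{(i)})}$, and let $P_{\mathrm{pseudo}}(y)=\frac1n\sum_{i=1}^n\delta_{y^{(i)}}$ where $y^{(i)}$ is the one-hot vector with $y^{(i)}_j=\mathbb{1}[j=\arg\max_{j'}f_{j'}(x^{(i)})]$. Then for every probability distribution $P'(y)$ supported on the set of one-hot vectors $\{0,1\}^k\cap\Delta^{k-1}$, $$W_\infty\bigl(f_\# P(c),P'(y)\bigr)\ \ge\ W_\infty\bigl(f_\# P(c),P_{\mathrm{pseudo}}(y)\bigr).$$
   Context: $\Delta^{k-1}=\{c\in\mathbb{R}^k: c_j\ge 0,\ \sum_j c_j=1\}$. For probability distributions $P,Q$ on $\mathbb{R}^k$, $W_\infty(P,Q)=\inf_{\pi\in\Pi(P,Q)}\int\|u-v\|_\infty\,d\pi(u,v)$ over couplings $\pi$ of $P$ and $Q$ (optimal transport distance with ground cost $\|u-v\|_\infty$). Ties in $\arg\max$ are broken by a fixed rule (e.g. smallest index). *)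

theory Defs
  imports "HOL-Probability.Probability"
begin

definition prob_simplex :: "(real ^ 'k::finite) set" where
  "prob_simplex = {c. (\<forall>j. c $ j \<ge> 0) \<and> (\<Sum>j\<in>UNIV. c $ j) = 1}"

definition onehots :: "(real ^ 'k::finite) set" where
  "onehots = {y. (\<forall>j. y $ j \<in> {0, 1})} \<inter> prob_simplex"

definition onehot :: "'k::finite \<Rightarrow> real ^ 'k" where
  "onehot j = (\<chi> j'. if j' = j then 1 else 0)"

definition linf_dist :: "real ^ 'k::finite \<Rightarrow> real ^ 'k \<Rightarrow> real" where
  "linf_dist u v = Max (range (\<lambda>j. \<bar>u $ j - v $ j\<bar>))"

definition couplings :: "(real ^ 'k::finite) measure \<Rightarrow> (real ^ 'k) measure
    \<Rightarrow> ((real ^ 'k) \<times> (real ^ 'k)) measure set" where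
  "couplings P Q = {\<pi>. prob_space \<pi> \<and> sets \<pi> = sets borel \<and>
      distr \<pi> borel fst = P \<and> distr \<pi> borel snd = Q}"

text \<open>W_infinity as defined in the paper: inf over couplings of the expected sup-norm cost.\<close>
definition W_inf :: "(real ^ 'k::finite) measure \<Rightarrow> (real ^ 'k) measure \<Rightarrow> ennreal" where
  "W_inf P Q = (INF \<pi>\<in>couplings P Q. \<integral>\<^sup>+ z. ennreal (linf_dist (fst z) (snd z)) \<partial>\<pi>)"

definition empirical :: "nat \<Rightarrow> (nat \<Rightarrow> real ^ 'k::finite) \<Rightarrow> (real ^ 'k) measure" where
  "empirical n g = distr (uniform_count_measure {..<n}) borel g"

end

theory Submission
  imports Defs
begin

text \<open>In the sup-norm, the one-hot vector nearest to a point c of the simplex is the one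
  at an argmax coordinate of c. Hence every coupling of the empirical measure of the
  confidences with a measure carried by one-hot vectors costs at least the mean distance
  from the confidences to the set of one-hot vectors, and the pseudo-label coupling
  i \<mapsto> (f (x i), onehot (lab i)) costs exactly that.\<close>

lemma onehots_eq_range_onehot: "(onehots :: (real ^ 'k::finite) set) = range onehot"
proof safe
  fix y :: "real ^ 'k"
  assume "y \<in> onehots"
  then have y01: "\<And>l. y $ l \<in> {0, 1}" and sum_y: "(\<Sum>l\<in>UNIV. y $ l) = 1"
    by (auto simp: onehots_def prob_simplex_def)
  have y_nonneg: "0 \<le> y $ l" for l
    using y01[of l] by auto
  obtain j where "y $ j \<noteq> 0"
    using sum_y by (metis (no_types) sum.neutral zero_neq_one)
  then have yj: "y $ j = 1"
    using y01[of j] by auto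
  have "y $ l = 0" if "l \<noteq> j" for l
  proof (rule ccontr)
    assume "y $ l \<noteq> 0"
    then have "y $ l = 1"
      using y01[of l] by auto
    moreover have "(\<Sum>i\<in>{j, l}. y $ i) \<le> (\<Sum>i\<in>UNIV. y $ i)"
      using y_nonneg by (intro sum_mono2) auto
    ultimately show False
      using that yj sum_y by simp
  qed
  then have "y = onehot j"
    using yj by (auto simp: onehot_def vec_eq_iff)
  then show "y \<in> range onehot"
    by simp
next
  fix j :: 'k
  show "onehot j \<in> onehots"
    by (auto simp: onehots_def prob_simplex_def onehot_def)
qed

lemma prob_simplex_le_one:
  assumes "c \<in> prob_simplex"
  shows "c $ j \<le> 1"
proof -
  have "c $ j \<le> (\<Sum>l\<in>UNIV. c $ l)"
    using assms by (intro member_le_sum) (auto simp: prob_simplex_def)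
  then show ?thesis
    using assms by (simp add: prob_simplex_def)
qed

lemma component_le_linf_dist: "\<bar>u $ j - v $ j\<bar> \<le> linf_dist u v"
  unfolding linf_dist_def by (rule Max_ge) auto

lemma linf_dist_onehot_of_max_le:
  fixes c :: "real ^ 'k::finite"
  assumes nonneg: "\<And>l. 0 \<le> c $ l" and le_one: "\<And>l. c $ l \<le> 1"
    and max: "\<And>l. c $ l \<le> c $ m"
  shows "linf_dist c (onehot m) \<le> linf_dist c (onehot j)"
  unfolding linf_dist_def[of c "onehot m"]
proof (rule Max.boundedI; clarify?)
  fix l
  have "\<bar>c $ l - onehot m $ l\<bar> \<le> \<bar>c $ i - onehot j $ i\<bar>"
    if "i = (if l = m then j else if l = j then m else l)" for i
    using that nonneg le_one max[of j] max[of l] by (auto simp: onehot_def)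
  then show "\<bar>c $ l - onehot m $ l\<bar> \<le> linf_dist c (onehot j)"
    using component_le_linf_dist order_trans by blast
qed simp_all

definition onehot_dist :: "real ^ 'k::finite \<Rightarrow> real" where
  "onehot_dist u = Min (range (\<lambda>j. linf_dist u (onehot j)))"

lemma onehot_dist_le_linf_dist:
  assumes "y \<in> onehots"
  shows "onehot_dist u \<le> linf_dist u y"
  using assms unfolding onehots_eq_range_onehot onehot_dist_def by (auto intro: Min_le)

lemma onehot_dist_eq_onehot_of_max:
  assumes "c \<in> prob_simplex" and "\<And>l. c $ l \<le> c $ m"
  shows "onehot_dist c = linf_dist c (onehot m)"
  unfolding onehot_dist_def
proof (rule antisym)
  show "Min (range (\<lambda>j. linf_dist c (onehot j))) \<le> linf_dist c (onehot m)"
    by (rule Min_le) auto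
  show "linf_dist c (onehot m) \<le> Min (range (\<lambda>j. linf_dist c (onehot j)))"
    using assms prob_simplex_le_one
    by (subst Min_ge_iff) (auto intro!: linf_dist_onehot_of_max_le simp: prob_simplex_def)
qed

lemma borel_measurable_onehot_dist [measurable]: "onehot_dist \<in> borel_measurable borel"
  unfolding onehot_dist_def linf_dist_def by measurable

lemma borel_measurable_linf_dist [measurable]:
  "(\<lambda>z. linf_dist (fst z) (snd z :: real ^ 'k::finite)) \<in> borel_measurable borel"
  unfolding linf_dist_def
  by (intro borel_measurable_Max borel_measurable_continuous_onI continuous_intros) auto

lemma empirical_pair_in_couplings:
  assumes "n > 0"
  shows "distr (uniform_count_measure {..<n}) borel (\<lambda>i. (a i, b i))
           \<in> couplings (empirical n a) (empirical n b)"
proof -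
  let ?U = "uniform_count_measure {..<n}"
  have U: "prob_space ?U"
    using assms by (intro prob_space_uniform_count_measure) auto
  have pair: "(\<lambda>i. (a i, b i)) \<in> measurable ?U borel"
    by measurable
  have fst: "fst \<in> borel_measurable borel" and snd: "snd \<in> borel_measurable borel"
    by (intro borel_measurable_continuous_onI continuous_intros)+
  have "distr (distr ?U borel (\<lambda>i. (a i, b i))) borel fst = empirical n a"
    unfolding empirical_def by (subst distr_distr[OF fst pair]) (simp add: o_def)
  moreover have "distr (distr ?U borel (\<lambda>i. (a i, b i))) borel snd = empirical n b"
    unfolding empirical_def by (subst distr_distr[OF snd pair]) (simp add: o_def)
  ultimately show ?thesis
    unfolding couplings_def using prob_space.prob_space_distr[OF U pair] by simp
qed

lemma nn_integral_le_coupling_cost: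
  assumes \<pi>: "\<pi> \<in> couplings P Q" and supp: "AE y in Q. y \<in> S"
    and g: "g \<in> borel_measurable borel"
    and g_le: "\<And>u y. y \<in> S \<Longrightarrow> g u \<le> linf_dist u y"
  shows "(\<integral>\<^sup>+ u. ennreal (g u) \<partial>P) \<le> (\<integral>\<^sup>+ z. ennreal (linf_dist (fst z) (snd z)) \<partial>\<pi>)"
proof -
  have sets_\<pi>: "sets \<pi> = sets borel" and P: "P = distr \<pi> borel fst" and Q: "Q = distr \<pi> borel snd"
    using \<pi> by (auto simp: couplings_def)
  have fst: "fst \<in> measurable \<pi> borel" and snd: "snd \<in> measurable \<pi> borel"
    unfolding measurable_cong_sets[OF sets_\<pi> refl]
    by (intro borel_measurable_continuous_onI continuous_intros)+
  have "AE z in \<pi>. snd z \<in> S"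
    using AE_distrD[OF snd] supp unfolding Q .
  then have "AE z in \<pi>. ennreal (g (fst z)) \<le> ennreal (linf_dist (fst z) (snd z))"
    by eventually_elim (auto intro: ennreal_leI g_le)
  then have "(\<integral>\<^sup>+ z. ennreal (g (fst z)) \<partial>\<pi>) \<le> (\<integral>\<^sup>+ z. ennreal (linf_dist (fst z) (snd z)) \<partial>\<pi>)"
    by (rule nn_integral_mono_AE)
  then show ?thesis
    unfolding P using g fst by (subst nn_integral_distr) auto
qed

theorem mainTheorem2:
  fixes f :: "'a \<Rightarrow> real ^ 'k::finite"
    and x :: "nat \<Rightarrow> 'a"
    and n :: nat
    and lab :: "nat \<Rightarrow> 'k"
    and P' :: "(real ^ 'k) measure"
  assumes f_simplex: "\<And>z. f z \<in> prob_simplex"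
    and n_pos: "n > 0"
    and lab_argmax: "\<And>i j. i < n \<Longrightarrow> f (x i) $ j \<le> f (x i) $ lab i"
    and P'_prob: "prob_space P'"
    and P'_borel: "sets P' = sets borel"
    and P'_supp: "emeasure P' onehots = 1"
  shows "W_inf (empirical n (\<lambda>i. f (x i))) P'
           \<ge> W_inf (empirical n (\<lambda>i. f (x i))) (empirical n (\<lambda>i. onehot (lab i)))"
proof -
  let ?U = "uniform_count_measure {..<n}"
  let ?E = "empirical n (\<lambda>i. f (x i))"
  let ?cost = "\<lambda>z. ennreal (linf_dist (fst z) (snd z))"
  define \<pi> where "\<pi> = distr ?U borel (\<lambda>i. (f (x i), onehot (lab i)))"
  have onehots_borel: "onehots \<in> sets (borel :: (real ^ 'k) measure)"
    unfolding onehots_eq_range_onehot by (intro borel_closed finite_imp_closed) simp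
  have P'_onehots: "AE y in P'. y \<in> onehots"
    using prob_space.AE_in_set_eq_1[OF P'_prob] onehots_borel P'_borel P'_supp
    by (simp add: measure_def)
  have "W_inf ?E (empirical n (\<lambda>i. onehot (lab i))) \<le> (\<integral>\<^sup>+ z. ?cost z \<partial>\<pi>)"
    unfolding W_inf_def \<pi>_def by (intro INF_lower empirical_pair_in_couplings n_pos)
  also have "\<dots> = (\<integral>\<^sup>+ i. ?cost (f (x i), onehot (lab i)) \<partial>?U)"
    unfolding \<pi>_def by (simp add: nn_integral_distr)
  also have "\<dots> = (\<integral>\<^sup>+ i. ennreal (onehot_dist (f (x i))) \<partial>?U)"
    using onehot_dist_eq_onehot_of_max[OF f_simplex lab_argmax]
    by (intro nn_integral_cong) (simp add: space_uniform_count_measure)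
  also have "\<dots> = (\<integral>\<^sup>+ u. ennreal (onehot_dist u) \<partial>?E)"
    unfolding empirical_def by (simp add: nn_integral_distr)
  also have "\<dots> \<le> W_inf ?E P'"
    unfolding W_inf_def using P'_onehots borel_measurable_onehot_dist onehot_dist_le_linf_dist
    by (intro INF_greatest nn_integral_le_coupling_cost)
  finally show ?thesis .
qed

end
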